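(* A function $f(x)=\sum_{m\ge0}x^ma_m$ in $\mathcal{SM}(\mathbb{R}^{n+1})$, with $a_m\in\mathbb{R}_n$ for $m\in\mathbb{N}$, belongs to $\mathcal{F}(\mathbb{R}^{n+1})$ if and only if $\sum_{m\ge0}|a_m|^2\,m!<\infty$.
   Context: $\mathbb{R}_n$ is the real Clifford algebra generated by $e_1,\dots,e_n$ with $e_ie_j+e_je_i=-2\delta_{ij}$; elements are $a=\sum_Ae_Ax_A$ over increasing multi-indices $A$, with $e_\emptyset=1$, and $|a|^2=\sum_Ax_A^2$. Paravectors $x=x_0+\sum_{j=1}^nx_je_j$ are identified with points of $\mathbb{R}^{n+1}$, $|x|^2=\sum_{j=0}^nx_j^2$. $\mathbb{S}=\{e_1x_1+\dots+e_nx_n:x_1^2+\dots+x_n^2=1\}$; for $I\in\mathbb{S}$, $\mathbb{C}_I=\mathbb{R}+I\mathbb{R}$. A real differentiable $f:\mathbb{R}^{n+1}\to\mathbb{R}_n$ is (left) slice monogenic if for every $I\in\mathbb{S}$ its restriction $f_I$ to $\mathbb{C}_I$ satisfies $\frac12\left(\frac{\partial}{\partial u}+I\frac{\partial}{\partial v}\right)f_I(u+Iv)=0$; $\mathcal{SM}(\mathbb{R}^{n+1})$ is the set of such functions on $\mathbb{R}^{n+1}$. For fixed $I\in\mathbb{S}$, the Clifford-Fock space is $\mathcal{F}(\mathbb{R}^{n+1})=\{f\in\mathcal{SM}(\mathbb{R}^{n+1}):\int_{\mathbb{C}_I}e^{-|x|^2}|f_I(x)|^2\,d\sigma(u,v)<\infty\}$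 with $x=u+Iv$, $d\sigma(u,v)=\frac1\pi du\,dv$. *)

theory Defs
  imports "HOL-Analysis.Analysis"
begin

text \<open>Elements of the real Clifford algebra R_n are represented by their coefficient
  functions A \<mapsto> x_A over multi-indices A (finite subsets of {1..n}).
  Coefficients at sets not contained in {1..n} are irrelevant (zero for genuine elements).\<close>

type_synonym cliff = "nat set \<Rightarrow> real"

definition cliff_el :: "nat \<Rightarrow> cliff \<Rightarrow> bool" where
  "cliff_el n a \<longleftrightarrow> (\<forall>A. \<not> A \<subseteq> {1..n} \<longrightarrow> a A = 0)"

definition cone :: cliff where
  "cone = (\<lambda>A. if A = {} then 1 else 0)"

text \<open>Sign of e_A e_B = sign * e_(A symdiff B), from e_i e_j = - e_j e_i (i \<noteq> j), e_i^2 = -1.\<close>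
definition csign :: "nat set \<Rightarrow> nat set \<Rightarrow> real" where
  "csign A B = (-1) ^ (card {(i, j). i \<in> A \<and> j \<in> B \<and> j < i} + card (A \<inter> B))"

definition cmult :: "nat \<Rightarrow> cliff \<Rightarrow> cliff \<Rightarrow> cliff" where
  "cmult n a b = (\<lambda>C. \<Sum>A\<in>Pow {1..n}. \<Sum>B\<in>Pow {1..n}.
      if (A - B) \<union> (B - A) = C then csign A B * a A * b B else 0)"

definition cpow :: "nat \<Rightarrow> cliff \<Rightarrow> nat \<Rightarrow> cliff" where
  "cpow n x m = (cmult n x ^^ m) cone"

definition cnorm2 :: "nat \<Rightarrow> cliff \<Rightarrow> real" where
  "cnorm2 n a = (\<Sum>A\<in>Pow {1..n}. (a A)^2)"

definition para :: "nat \<Rightarrow> (nat \<Rightarrow> real) \<Rightarrow> cliff" where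
  "para n x = (\<lambda>A. x 0 * (if A = {} then 1 else 0) + (\<Sum>j=1..n. x j * (if A = {j} then 1 else 0)))"

definition sphS :: "nat \<Rightarrow> cliff set" where
  "sphS n = {para n x | x. x 0 = 0 \<and> (\<Sum>j=1..n. (x j)^2) = 1}"

definition slicept :: "cliff \<Rightarrow> real \<Rightarrow> real \<Rightarrow> cliff" where
  "slicept I u v = (\<lambda>A. u * cone A + v * I A)"

text \<open>Real (Frechet) differentiability of a map R^{n+1} \<rightarrow> R_n, given in coordinates
  x_0,...,x_n, written out componentwise.\<close>
definition real_diff :: "nat \<Rightarrow> ((nat \<Rightarrow> real) \<Rightarrow> cliff) \<Rightarrow> bool" where
  "real_diff n g \<longleftrightarrow> (\<forall>p. \<exists>D :: nat \<Rightarrow> cliff. \<forall>A. \<forall>\<epsilon>>0. \<exists>\<delta>>0. \<forall>h.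
      (\<forall>j>n. h j = 0) \<and> sqrt (\<Sum>j\<le>n. (h j)^2) < \<delta> \<longrightarrow>
      \<bar>g (\<lambda>j. p j + h j) A - g p A - (\<Sum>j\<le>n. h j * D j A)\<bar> \<le> \<epsilon> * sqrt (\<Sum>j\<le>n. (h j)^2))"

definition slice_monogenic :: "nat \<Rightarrow> (cliff \<Rightarrow> cliff) \<Rightarrow> bool" where
  "slice_monogenic n f \<longleftrightarrow> real_diff n (\<lambda>x. f (para n x)) \<and>
     (\<forall>I\<in>sphS n. \<forall>u v. \<exists>Du Dv :: cliff.
        (\<forall>A. ((\<lambda>t. f (slicept I t v) A) has_real_derivative Du A) (at u)) \<and>
        (\<forall>A. ((\<lambda>t. f (slicept I u t) A) has_real_derivative Dv A) (at v)) \<and>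
        (\<forall>A. (1/2) * (Du A + cmult n I Dv A) = 0))"

text \<open>Clifford-Fock space for fixed I, with d\<sigma> = (1/pi) du dv and |u + I v|^2 = u^2 + v^2.\<close>
definition fock :: "nat \<Rightarrow> cliff \<Rightarrow> (cliff \<Rightarrow> cliff) \<Rightarrow> bool" where
  "fock n I f \<longleftrightarrow> slice_monogenic n f \<and>
     (\<integral>\<^sup>+ z. ennreal (exp (- (fst z ^ 2 + snd z ^ 2)) * cnorm2 n (f (slicept I (fst z) (snd z))) / pi)
        \<partial>(lborel :: (real \<times> real) measure)) < \<infinity>"

end

(* On the slice C_I, a copy of the complex plane, the coefficient of e_C in f (u + I v) is the
   real part of the entire function h_C (z) = sum_m (a_m(C) - i (I a_m)(C)) z^m.  Left
   multiplication by I is an isometry of R_n with square -1, so sum_C |h_C (z)|^2 = 2 |f (u + I v)|^2,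
   and likewise the coefficients of z^m in the h_C have total squared modulus 2 |a_m|^2.  The
   classical identity (1/pi) int e^(-|z|^2) |sum_m c_m z^m|^2 = sum_m |c_m|^2 m! for entire
   functions, which follows from the rotation invariance of Lebesgue measure, Parseval's identity on
   circles and the Gaussian moments, then turns the Fock norm of f into sum_m |a_m|^2 m!. *)

theory Submission
  imports Defs "HOL-Probability.Probability"
begin

section \<open>Gaussian moments\<close>

lemma nn_integral_lborel_pair:
  fixes f :: "real \<times> real \<Rightarrow> ennreal"
  assumes "f \<in> borel_measurable borel"
  shows "(\<integral>\<^sup>+ p. f p \<partial>lborel) = (\<integral>\<^sup>+ u. \<integral>\<^sup>+ v. f (u, v) \<partial>lborel \<partial>lborel)"
proof -
  have "f \<in> borel_measurable (lborel \<Otimes>\<^sub>M lborel)"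
    unfolding lborel_prod using assms by simp
  then show ?thesis
    by (simp only: lborel.nn_integral_fst lborel_prod)
qed

lemma nn_integral_lborel_pair':
  fixes f :: "real \<times> real \<Rightarrow> ennreal"
  assumes "f \<in> borel_measurable borel"
  shows "(\<integral>\<^sup>+ p. f p \<partial>lborel) = (\<integral>\<^sup>+ v. \<integral>\<^sup>+ u. f (u, v) \<partial>lborel \<partial>lborel)"
proof -
  have "f \<in> borel_measurable (lborel \<Otimes>\<^sub>M lborel)"
    unfolding lborel_prod using assms by simp
  then show ?thesis
    by (simp only: lborel_pair.nn_integral_snd lborel_prod)
qed

lemma nn_integral_gaussian_even_moment:
  "(\<integral>\<^sup>+ x. ennreal (exp (- x\<^sup>2) * x ^ (2*k)) \<partial>lborel) = ennreal (sqrt pi * pochhammer (1/2) k)"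
proof -
  let ?\<phi> = "\<lambda>x. std_normal_density x * x ^ (2*k)"
  have hb: "has_bochner_integral lborel ?\<phi> (fact (2*k) / (2 ^ k * fact k))"
    by (rule std_normal_moment_even)
  have "(\<integral>\<^sup>+ x. ennreal (?\<phi> x) \<partial>lborel) = ennreal (fact (2*k) / (2 ^ k * fact k))"
    using nn_integral_eq_integral[OF integrable.intros[OF hb]] has_bochner_integral_integral_eq[OF hb]
    by (simp add: power_mult)
  also have "fact (2*k) / (2 ^ k * fact k) = (2 ^ k * pochhammer (1/2) k :: real)"
    by (subst fact_double) (simp add: mult_2 power_add)
  finally have moment: "(\<integral>\<^sup>+ x. ennreal (?\<phi> x) \<partial>lborel) = ennreal (2 ^ k * pochhammer (1/2) k)" .
  have rescale: "exp (- x\<^sup>2) * x ^ (2*k) = (sqrt pi / 2 ^ k) * (sqrt 2 * ?\<phi> (0 + sqrt 2 * x))" for x :: real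
  proof -
    have "sqrt 2 * ?\<phi> (sqrt 2 * x) = (sqrt 2 / sqrt (2 * pi)) * exp (- x\<^sup>2) * 2 ^ k * x ^ (2*k)"
      by (simp add: std_normal_density_def power_mult_distrib power_mult)
    also have "sqrt 2 / sqrt (2 * pi) = 1 / sqrt pi"
      by (simp add: real_sqrt_mult)
    finally show ?thesis by simp
  qed
  have "(\<integral>\<^sup>+ x. ennreal (exp (- x\<^sup>2) * x ^ (2*k)) \<partial>lborel) =
        (\<integral>\<^sup>+ x. ennreal (sqrt pi / 2 ^ k) * (ennreal (sqrt 2) * ennreal (?\<phi> (0 + sqrt 2 * x))) \<partial>lborel)"
    by (intro nn_integral_cong, subst rescale) (simp add: ennreal_mult'[symmetric] ennreal_mult[symmetric])
  also have "\<dots> = ennreal (sqrt pi / 2 ^ k) * (sqrt 2 * \<integral>\<^sup>+ x. ennreal (?\<phi> (0 + sqrt 2 * x)) \<partial>lborel)"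
    by (simp add: nn_integral_cmult)
  also have "sqrt 2 * (\<integral>\<^sup>+ x. ennreal (?\<phi> (0 + sqrt 2 * x)) \<partial>lborel) = (\<integral>\<^sup>+ x. ennreal (?\<phi> x) \<partial>lborel)"
    using nn_integral_real_affine[of "\<lambda>x. ennreal (?\<phi> x)" "sqrt 2" 0] by simp
  finally show ?thesis
    by (simp add: moment ennreal_mult[symmetric] less_imp_le[OF pochhammer_pos])
qed

lemma nn_integral_gaussian_product_moment:
  "(\<integral>\<^sup>+ p. ennreal (exp (- (fst p ^ 2 + snd p ^ 2)) * fst p ^ (2*i) * snd p ^ (2*j)) \<partial>lborel)
     = ennreal (pi * pochhammer (1/2) i * pochhammer (1/2) j)"
proof -
  define G where "G k u = ennreal (exp (- u\<^sup>2) * u ^ (2*k))" for k and u :: real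
  have [measurable]: "G k \<in> borel_measurable borel" for k
    unfolding G_def by measurable
  have "(\<integral>\<^sup>+ p. ennreal (exp (- (fst p ^ 2 + snd p ^ 2)) * fst p ^ (2*i) * snd p ^ (2*j)) \<partial>lborel)
      = (\<integral>\<^sup>+ u. \<integral>\<^sup>+ v. G i u * G j v \<partial>lborel \<partial>lborel)"
  proof (subst nn_integral_lborel_pair)
    show "(\<lambda>p. ennreal (exp (- (fst p ^ 2 + snd p ^ 2)) * fst p ^ (2*i) * snd p ^ (2*j))) \<in> borel_measurable borel"
      by (intro measurable_compose[OF _ measurable_ennreal] borel_measurable_continuous_onI continuous_intros)
    have "ennreal (exp (- (u\<^sup>2 + v\<^sup>2)) * u ^ (2*i) * v ^ (2*j)) = G i u * G j v" for u v :: real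
    proof -
      have "exp (- (u\<^sup>2 + v\<^sup>2)) * u ^ (2*i) * v ^ (2*j) = (exp (- u\<^sup>2) * u ^ (2*i)) * (exp (- v\<^sup>2) * v ^ (2*j))"
        by (simp add: exp_add[symmetric])
      then show ?thesis
        unfolding G_def by (simp only:) (rule ennreal_mult; simp add: power_mult)
    qed
    then show "(\<integral>\<^sup>+ u. \<integral>\<^sup>+ v. ennreal (exp (- (fst (u, v) ^ 2 + snd (u, v) ^ 2)) * fst (u, v) ^ (2*i) * snd (u, v) ^ (2*j)) \<partial>lborel \<partial>lborel)
        = (\<integral>\<^sup>+ u. \<integral>\<^sup>+ v. G i u * G j v \<partial>lborel \<partial>lborel)"
      by (simp only: fst_conv snd_conv)
  qed
  also have "\<dots> = ennreal (sqrt pi * pochhammer (1/2) i) * ennreal (sqrt pi * pochhammer (1/2) j)"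
    unfolding G_def by (simp add: nn_integral_cmult nn_integral_multc nn_integral_gaussian_even_moment)
  also have "\<dots> = ennreal (pi * pochhammer (1/2) i * pochhammer (1/2) j)"
    by (simp add: ennreal_mult[symmetric] less_imp_le[OF pochhammer_pos] power2_eq_square[symmetric] ac_simps)
  finally show ?thesis .
qed

text \<open>The one-dimensional moments are sqrt pi (1/2)_k, and the binomial theorem for rising
  factorials sums the products (1/2)_i (1/2)_(m-i) to (1)_m = m!.\<close>
lemma nn_integral_radial_moment:
  "(\<integral>\<^sup>+ p. ennreal (exp (- (fst p ^ 2 + snd p ^ 2)) * (fst p ^ 2 + snd p ^ 2) ^ m / pi) \<partial>lborel)
     = ennreal (fact m)"
proof -
  define P where "P i p = ennreal (exp (- (fst p ^ 2 + snd p ^ 2)) * fst p ^ (2*i) * snd p ^ (2*(m-i)))"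
    for i and p :: "real \<times> real"
  have P_measurable: "P i \<in> borel_measurable borel" for i
    unfolding P_def
    by (intro measurable_compose[OF _ measurable_ennreal] borel_measurable_continuous_onI continuous_intros)
  have P_integral: "(\<integral>\<^sup>+ p. P i p \<partial>lborel) = ennreal (pi * pochhammer (1/2) i * pochhammer (1/2) (m - i))" for i
    unfolding P_def by (rule nn_integral_gaussian_product_moment)
  have expansion: "ennreal (exp (- (fst p ^ 2 + snd p ^ 2)) * (fst p ^ 2 + snd p ^ 2) ^ m / pi)
      = (\<Sum>i\<le>m. ennreal (real (m choose i) / pi) * P i p)" for p :: "real \<times> real"
  proof -
    have "exp (- (fst p ^ 2 + snd p ^ 2)) * (fst p ^ 2 + snd p ^ 2) ^ m / pi
        = (\<Sum>i\<le>m. real (m choose i) / pi * (exp (- (fst p ^ 2 + snd p ^ 2)) * fst p ^ (2*i) * snd p ^ (2*(m-i))))"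
      unfolding binomial_ring power_mult by (simp add: sum_distrib_left sum_divide_distrib ac_simps)
    then have "ennreal (exp (- (fst p ^ 2 + snd p ^ 2)) * (fst p ^ 2 + snd p ^ 2) ^ m / pi)
        = (\<Sum>i\<le>m. ennreal (real (m choose i) / pi * (exp (- (fst p ^ 2 + snd p ^ 2)) * fst p ^ (2*i) * snd p ^ (2*(m-i)))))"
      by (simp only:) (rule sum_ennreal[symmetric], simp add: power_mult)
    also have "\<dots> = (\<Sum>i\<le>m. ennreal (real (m choose i) / pi) * P i p)"
      unfolding P_def by (intro sum.cong refl ennreal_mult') simp
    finally show ?thesis .
  qed
  have "(\<integral>\<^sup>+ p. ennreal (exp (- (fst p ^ 2 + snd p ^ 2)) * (fst p ^ 2 + snd p ^ 2) ^ m / pi) \<partial>lborel)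
      = (\<integral>\<^sup>+ p. (\<Sum>i\<le>m. ennreal (real (m choose i) / pi) * P i p) \<partial>lborel)"
    by (intro nn_integral_cong expansion)
  also have "\<dots> = (\<Sum>i\<le>m. ennreal (real (m choose i) / pi) * ennreal (pi * pochhammer (1/2) i * pochhammer (1/2) (m - i)))"
    by (subst nn_integral_sum)
       (auto intro!: borel_measurable_times_ennreal P_measurable simp: nn_integral_cmult P_measurable P_integral)
  also have "\<dots> = ennreal (\<Sum>i\<le>m. real (m choose i) * pochhammer (1/2) i * pochhammer (1/2) (m - i))"
  proof -
    have "ennreal (real (m choose i) / pi) * ennreal (pi * pochhammer (1/2) i * pochhammer (1/2) (m - i))
        = ennreal (real (m choose i) * pochhammer (1/2) i * pochhammer (1/2) (m - i))" for i
      by (subst ennreal_mult'[symmetric]) (simp_all add: mult.assoc)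
    then show ?thesis
      by (simp add: sum_ennreal less_imp_le[OF pochhammer_pos])
  qed
  also have "(\<Sum>i\<le>m. real (m choose i) * pochhammer (1/2) i * pochhammer (1/2) (m - i)) = fact m"
    using pochhammer_binomial_sum[of "1/2" "1/2 :: real" m] by (simp add: pochhammer_fact)
  finally show ?thesis .
qed

section \<open>Rotation invariance of planar Lebesgue measure\<close>

lemma nn_integral_lborel_shear_fst:
  fixes F :: "real \<times> real \<Rightarrow> ennreal"
  assumes [measurable]: "F \<in> borel_measurable borel"
  shows "(\<integral>\<^sup>+ p. F (fst p + a * snd p, snd p) \<partial>lborel) = (\<integral>\<^sup>+ p. F p \<partial>lborel)"
proof -
  have "(\<integral>\<^sup>+ u. F (u + a * v, v) \<partial>lborel) = (\<integral>\<^sup>+ u. F (u, v) \<partial>lborel)" for v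
    using nn_integral_real_affine[of "\<lambda>u. F (u, v)" 1 "a * v"] by (simp add: ac_simps)
  moreover have "(\<lambda>p. F (fst p + a * snd p, snd p)) \<in> borel_measurable borel"
    by (intro measurable_compose[OF borel_measurable_continuous_onI assms] continuous_intros)
  ultimately show ?thesis
    by (simp add: nn_integral_lborel_pair'[of F] nn_integral_lborel_pair'[of "\<lambda>p. F (fst p + a * snd p, snd p)"])
qed

lemma nn_integral_lborel_shear_snd:
  fixes F :: "real \<times> real \<Rightarrow> ennreal"
  assumes [measurable]: "F \<in> borel_measurable borel"
  shows "(\<integral>\<^sup>+ p. F (fst p, snd p + b * fst p) \<partial>lborel) = (\<integral>\<^sup>+ p. F p \<partial>lborel)"
proof -
  have "(\<integral>\<^sup>+ v. F (u, v + b * u) \<partial>lborel) = (\<integral>\<^sup>+ v. F (u, v) \<partial>lborel)" for u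
    using nn_integral_real_affine[of "\<lambda>v. F (u, v)" 1 "b * u"] by (simp add: ac_simps)
  moreover have "(\<lambda>p. F (fst p, snd p + b * fst p)) \<in> borel_measurable borel"
    by (intro measurable_compose[OF borel_measurable_continuous_onI assms] continuous_intros)
  ultimately show ?thesis
    by (simp add: nn_integral_lborel_pair[of F] nn_integral_lborel_pair[of "\<lambda>p. F (fst p, snd p + b * fst p)"])
qed

text \<open>If cos t is not -1, the rotation by t is S1 o S2 o S1 with the shears
  S1 (u, v) = (u + a v, v), where a = - tan (t/2), and S2 (u, v) = (u, v + sin t u).\<close>
lemma rotation_eq_shears:
  assumes t: "cos t \<noteq> -1"
  defines "a \<equiv> - sin t / (1 + cos t)"
  shows "Complex (u + a * v + a * (v + sin t * (u + a * v))) (v + sin t * (u + a * v)) = cis t * Complex u v"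
proof -
  have "1 + cos t \<noteq> 0"
    using t by (metis add_eq_0_iff)
  then have a_sin: "1 + a * sin t = cos t" and a_cos: "a * (1 + cos t) = - sin t"
    unfolding a_def using sin_squared_eq[of t] by (simp_all add: field_simps power2_eq_square)
  have "u + a * v + a * (v + sin t * (u + a * v)) = u * (1 + a * sin t) + v * (a * (1 + (1 + a * sin t)))"
    and "v + sin t * (u + a * v) = v * (1 + a * sin t) + sin t * u"
    by (simp_all add: algebra_simps)
  then show ?thesis
    unfolding a_sin a_cos by (simp add: complex_eq_iff algebra_simps)
qed

lemma nn_integral_lborel_rotate_shears:
  fixes F :: "complex \<Rightarrow> ennreal"
  assumes F: "F \<in> borel_measurable borel" and t: "cos t \<noteq> -1"
  shows "(\<integral>\<^sup>+ p. F (cis t * Complex (fst p) (snd p)) \<partial>lborel) = (\<integral>\<^sup>+ p. F (Complex (fst p) (snd p)) \<partial>lborel)"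
proof -
  define G where "G p = F (Complex (fst p) (snd p))" for p :: "real \<times> real"
  define a where "a = - sin t / (1 + cos t)"
  define S1 where "S1 p = (fst p + a * snd p, snd p)" for p :: "real \<times> real"
  define S2 where "S2 p = (fst p, snd p + sin t * fst p)" for p :: "real \<times> real"
  have G_measurable: "G \<in> borel_measurable borel"
    unfolding G_def by (intro measurable_compose[OF borel_measurable_continuous_onI F] continuous_intros)
  have GS1_measurable: "G \<circ> S1 \<in> borel_measurable borel"
    unfolding S1_def comp_def
    by (intro measurable_compose[OF borel_measurable_continuous_onI G_measurable] continuous_intros)
  have GS1S2_measurable: "G \<circ> S1 \<circ> S2 \<in> borel_measurable borel"
    unfolding S2_def comp_def[of _ S2]
    by (intro measurable_compose[OF borel_measurable_continuous_onI GS1_measurable] continuous_intros)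
  have "(\<integral>\<^sup>+ p. F (cis t * Complex (fst p) (snd p)) \<partial>lborel) = (\<integral>\<^sup>+ p. (G \<circ> S1 \<circ> S2) (S1 p) \<partial>lborel)"
    by (simp only: comp_def G_def S1_def S2_def fst_conv snd_conv rotation_eq_shears[OF t, folded a_def])
  also have "\<dots> = (\<integral>\<^sup>+ p. (G \<circ> S1) (S2 p) \<partial>lborel)"
    using nn_integral_lborel_shear_fst[OF GS1S2_measurable, of a] by (simp add: S1_def)
  also have "\<dots> = (\<integral>\<^sup>+ p. G (S1 p) \<partial>lborel)"
    using nn_integral_lborel_shear_snd[OF GS1_measurable, of "sin t"] by (simp add: S2_def)
  also have "\<dots> = (\<integral>\<^sup>+ p. G p \<partial>lborel)"
    using nn_integral_lborel_shear_fst[OF G_measurable, of a] by (simp add: S1_def)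
  finally show ?thesis
    unfolding G_def .
qed

lemma nn_integral_lborel_rotate:
  fixes F :: "complex \<Rightarrow> ennreal"
  assumes F: "F \<in> borel_measurable borel"
  shows "(\<integral>\<^sup>+ p. F (cis t * Complex (fst p) (snd p)) \<partial>lborel) = (\<integral>\<^sup>+ p. F (Complex (fst p) (snd p)) \<partial>lborel)"
proof (cases "cos t = -1")
  case True
  have "cos t = 2 * (cos (t/2))\<^sup>2 - 1"
    using cos_double_cos[of "t/2"] by simp
  then have "cos (t/2) \<noteq> -1"
    using True by auto
  have "(\<lambda>z. F (cis (t/2) * z)) \<in> borel_measurable borel"
    by (intro measurable_compose[OF borel_measurable_continuous_onI F] continuous_intros)
  have "(\<integral>\<^sup>+ p. F (cis t * Complex (fst p) (snd p)) \<partial>lborel)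
      = (\<integral>\<^sup>+ p. F (cis (t/2) * (cis (t/2) * Complex (fst p) (snd p))) \<partial>lborel)"
    by (simp add: cis_mult mult.assoc[symmetric])
  also have "\<dots> = (\<integral>\<^sup>+ p. F (cis (t/2) * Complex (fst p) (snd p)) \<partial>lborel)"
    by (rule nn_integral_lborel_rotate_shears) fact+
  also have "\<dots> = (\<integral>\<^sup>+ p. F (Complex (fst p) (snd p)) \<partial>lborel)"
    by (rule nn_integral_lborel_rotate_shears) fact+
  finally show ?thesis .
next
  case False
  with F show ?thesis
    by (rule nn_integral_lborel_rotate_shears)
qed

section \<open>Parseval's identity for absolutely convergent trigonometric series\<close>

lemma integrable_indicator_times_continuous:
  fixes f :: "real \<Rightarrow> real"
  assumes "continuous_on UNIV f"
  shows "integrable lborel (\<lambda>t. indicator {a..b} t * f t)"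
  using borel_integrable_atLeastAtMost'[OF continuous_on_subset[OF assms subset_UNIV]]
  unfolding set_integrable_def by simp

lemma integral_cos_int_mult_period:
  fixes j :: int
  shows "(\<integral>t. indicator {0..2*pi} t * cos (of_int j * t) \<partial>lborel) = (if j = 0 then 2*pi else 0)"
proof (cases "j = 0")
  case True
  have "(\<integral>t. indicator {0..2*pi} t *\<^sub>R (1::real) \<partial>lborel) = 2*pi - 0"
    by (rule integral_FTC_atLeastAtMost[where F="\<lambda>t. t"])
       (auto intro!: derivative_eq_intros continuous_intros simp flip: has_real_derivative_iff_has_vector_derivative)
  with True show ?thesis
    by simp
next
  case False
  have "(\<integral>t. indicator {0..2*pi} t *\<^sub>R cos (of_int j * t) \<partial>lborel) =
      sin (of_int j * (2*pi)) / of_int j - sin (of_int j * 0) / of_int j"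
    using False
    by (intro integral_FTC_atLeastAtMost[where F="\<lambda>t. sin (of_int j * t) / of_int j"])
       (auto intro!: derivative_eq_intros continuous_intros simp flip: has_real_derivative_iff_has_vector_derivative)
  also have "\<dots> = 0"
    using sin_int_2pin[of j] by (simp add: ac_simps)
  finally show ?thesis
    using False by simp
qed

lemma integral_sin_int_mult_period:
  fixes j :: int
  shows "(\<integral>t. indicator {0..2*pi} t * sin (of_int j * t) \<partial>lborel) = 0"
proof (cases "j = 0")
  case False
  have "(\<integral>t. indicator {0..2*pi} t *\<^sub>R sin (of_int j * t) \<partial>lborel) =
      - cos (of_int j * (2*pi)) / of_int j - - cos (of_int j * 0) / of_int j"
    using False
    by (intro integral_FTC_atLeastAtMost[where F="\<lambda>t. - cos (of_int j * t) / of_int j"])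
       (auto intro!: derivative_eq_intros continuous_intros simp flip: has_real_derivative_iff_has_vector_derivative)
  also have "\<dots> = 0"
    using cos_int_2pin[of j] by (simp add: ac_simps)
  finally show ?thesis
    by simp
qed simp

lemma norm_trig_poly_squared:
  fixes d :: "nat \<Rightarrow> complex"
  shows "(cmod (\<Sum>m<N. d m * cis (real m * t)))\<^sup>2 =
     (\<Sum>m<N. \<Sum>k<N. Re (d m * cnj (d k)) * cos (of_int (int m - int k) * t)
                    - Im (d m * cnj (d k)) * sin (of_int (int m - int k) * t))"
proof -
  have "(cmod (\<Sum>m<N. d m * cis (real m * t)))\<^sup>2
      = Re ((\<Sum>m<N. d m * cis (real m * t)) * cnj (\<Sum>k<N. d k * cis (real k * t)))"
    by (metis complex_norm_square Re_complex_of_real)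
  also have "(\<Sum>m<N. d m * cis (real m * t)) * cnj (\<Sum>k<N. d k * cis (real k * t)) =
      (\<Sum>m<N. \<Sum>k<N. d m * cnj (d k) * (cis (real m * t) * cis (- (real k * t))))"
    by (simp add: sum_distrib_left sum_distrib_right cis_cnj ac_simps) (rule sum.swap)
  also have "\<dots> = (\<Sum>m<N. \<Sum>k<N. d m * cnj (d k) * cis (of_int (int m - int k) * t))"
    by (simp add: cis_mult algebra_simps)
  finally show ?thesis
    by (simp add: Re_sum)
qed

lemma integral_norm_trig_poly_squared:
  fixes d :: "nat \<Rightarrow> complex"
  shows "(\<integral>t. indicator {0..2*pi} t * (cmod (\<Sum>m<N. d m * cis (real m * t)))\<^sup>2 \<partial>lborel) =
     2 * pi * (\<Sum>m<N. (cmod (d m))\<^sup>2)"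
proof -
  define A where "A m k = Re (d m * cnj (d k))" for m k
  define B where "B m k = Im (d m * cnj (d k))" for m k
  define j where "j m k = int m - int k" for m k
  define C where "C m k t = indicator {0..2*pi} t * cos (of_int (j m k) * t)" for m k and t :: real
  define S where "S m k t = indicator {0..2*pi} t * sin (of_int (j m k) * t)" for m k and t :: real
  have "(\<integral>t. indicator {0..2*pi} t * (cmod (\<Sum>m<N. d m * cis (real m * t)))\<^sup>2 \<partial>lborel) =
      (\<integral>t. (\<Sum>m<N. \<Sum>k<N. A m k * C m k t - B m k * S m k t) \<partial>lborel)"
    unfolding norm_trig_poly_squared A_def B_def C_def S_def j_def
    by (intro Bochner_Integration.integral_cong refl) (simp add: sum_distrib_left algebra_simps sum_subtractf)
  also have "\<dots> = (\<Sum>m<N. \<Sum>k<N. A m k * integral\<^sup>L lborel (C m k) - B m k * integral\<^sup>L lborel (S m k))"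
  proof -
    have "integrable lborel (C m k)" "integrable lborel (S m k)" for m k
      unfolding C_def S_def by (intro integrable_indicator_times_continuous continuous_intros)+
    then show ?thesis
      by (simp add: Bochner_Integration.integral_sum Bochner_Integration.integral_diff integrable_sum integrable_diff)
  qed
  also have "\<dots> = (\<Sum>m<N. \<Sum>k<N. if m = k then 2 * pi * A m m else 0)"
    unfolding C_def S_def integral_cos_int_mult_period integral_sin_int_mult_period j_def
    by (intro sum.cong refl) auto
  also have "\<dots> = 2 * pi * (\<Sum>m<N. (cmod (d m))\<^sup>2)"
    by (simp add: A_def sum_distrib_left complex_mult_cnj cmod_def)
  finally show ?thesis .
qed

lemma trig_series_dominated_convergence:
  fixes d :: "nat \<Rightarrow> complex"
  assumes d: "summable (\<lambda>m. norm (d m))"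
  defines "g \<equiv> \<lambda>t. indicator {0..2*pi} t * (cmod (\<Sum>m. d m * cis (real m * t)))\<^sup>2"
  shows "integrable lborel g"
    and "(\<lambda>N. \<integral>t. indicator {0..2*pi} t * (cmod (\<Sum>m<N. d m * cis (real m * t)))\<^sup>2 \<partial>lborel)
           \<longlonglongrightarrow> integral\<^sup>L lborel g"
proof -
  define gN where "gN N t = indicator {0..2*pi} t * (cmod (\<Sum>m<N. d m * cis (real m * t)))\<^sup>2" for N t
  define B where "B = (\<Sum>m. norm (d m))"
  have "summable (\<lambda>m. norm (d m * cis (real m * t)))" for t
    using d by (simp add: norm_mult)
  then have "(\<lambda>N. \<Sum>m<N. d m * cis (real m * t)) \<longlonglongrightarrow> (\<Sum>m. d m * cis (real m * t))" for t
    by (rule summable_LIMSEQ[OF summable_norm_cancel])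
  then have lim: "(\<lambda>N. gN N t) \<longlonglongrightarrow> g t" for t
    unfolding gN_def g_def by (intro tendsto_intros)
  have gN_measurable: "gN N \<in> borel_measurable lborel" for N
    unfolding gN_def measurable_lborel2
    by (intro borel_measurable_times borel_measurable_indicator borel_measurable_continuous_onI continuous_intros) simp
  have g_measurable: "g \<in> borel_measurable lborel"
    by (rule borel_measurable_LIMSEQ_real[OF lim gN_measurable])
  have bound: "AE t in lborel. norm (gN N t) \<le> indicator {0..2*pi} t * B\<^sup>2" for N
  proof (rule AE_I2)
    fix t
    have "cmod (\<Sum>m<N. d m * cis (real m * t)) \<le> (\<Sum>m<N. norm (d m))"
      by (rule order_trans[OF norm_sum]) (simp add: norm_mult)
    also have "\<dots> \<le> B"
      unfolding B_def by (rule sum_le_suminf[OF d]) auto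
    finally have "(cmod (\<Sum>m<N. d m * cis (real m * t)))\<^sup>2 \<le> B\<^sup>2"
      by (intro power_mono) auto
    then show "norm (gN N t) \<le> indicator {0..2*pi} t * B\<^sup>2"
      unfolding gN_def by (auto split: split_indicator)
  qed
  have dominant: "integrable lborel (\<lambda>t. indicator {0..2*pi} t * B\<^sup>2)"
    by (intro integrable_indicator_times_continuous continuous_intros)
  show "integrable lborel g"
    by (rule integrable_dominated_convergence[where s=gN, OF g_measurable gN_measurable dominant _ bound]) (simp add: lim)
  show "(\<lambda>N. \<integral>t. indicator {0..2*pi} t * (cmod (\<Sum>m<N. d m * cis (real m * t)))\<^sup>2 \<partial>lborel)
           \<longlonglongrightarrow> integral\<^sup>L lborel g"
    using integral_dominated_convergence[where s=gN, OF g_measurable gN_measurable dominant _ bound] lim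
    unfolding gN_def by simp
qed

lemma parseval_trig_series:
  fixes d :: "nat \<Rightarrow> complex"
  assumes d: "summable (\<lambda>m. norm (d m))"
  shows "summable (\<lambda>m. (cmod (d m))\<^sup>2)"
    and "(\<integral>\<^sup>+ t. ennreal (indicator {0..2*pi} t * (cmod (\<Sum>m. d m * cis (real m * t)))\<^sup>2) \<partial>lborel)
       = ennreal (2 * pi * (\<Sum>m. (cmod (d m))\<^sup>2))"
proof -
  define g where "g t = indicator {0..2*pi} t * (cmod (\<Sum>m. d m * cis (real m * t)))\<^sup>2" for t
  have "(\<lambda>N. 2 * pi * (\<Sum>m<N. (cmod (d m))\<^sup>2)) \<longlonglongrightarrow> integral\<^sup>L lborel g"
    using trig_series_dominated_convergence(2)[OF d] unfolding g_def integral_norm_trig_poly_squared .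
  then have "(\<lambda>N. 2 * pi * (\<Sum>m<N. (cmod (d m))\<^sup>2) / (2 * pi)) \<longlonglongrightarrow> integral\<^sup>L lborel g / (2 * pi)"
    by (intro tendsto_divide tendsto_const) simp_all
  then have partial_sums: "(\<lambda>N. \<Sum>m<N. (cmod (d m))\<^sup>2) \<longlonglongrightarrow> integral\<^sup>L lborel g / (2 * pi)"
    by simp
  then show summable: "summable (\<lambda>m. (cmod (d m))\<^sup>2)"
    using summable_iff_convergent convergent_def by blast
  have "integral\<^sup>L lborel g = 2 * pi * (\<Sum>m. (cmod (d m))\<^sup>2)"
    using LIMSEQ_unique[OF partial_sums summable_LIMSEQ[OF summable]] by (simp add: field_simps)
  moreover have "(\<integral>\<^sup>+ t. ennreal (g t) \<partial>lborel) = ennreal (integral\<^sup>L lborel g)"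
    using trig_series_dominated_convergence(1)[OF d] unfolding g_def
    by (rule nn_integral_eq_integral) simp
  ultimately show "(\<integral>\<^sup>+ t. ennreal (indicator {0..2*pi} t * (cmod (\<Sum>m. d m * cis (real m * t)))\<^sup>2) \<partial>lborel)
       = ennreal (2 * pi * (\<Sum>m. (cmod (d m))\<^sup>2))"
    unfolding g_def by simp
qed

section \<open>The Fock identity for entire functions\<close>

lemma nn_integral_angular_average:
  fixes W :: "complex \<Rightarrow> ennreal"
  assumes W: "W \<in> borel_measurable borel"
  shows "(\<integral>\<^sup>+ p. W (Complex (fst p) (snd p)) \<partial>lborel) =
    (\<integral>\<^sup>+ p. \<integral>\<^sup>+ t. ennreal (indicator {0..2*pi} t / (2*pi)) * W (cis t * Complex (fst p) (snd p)) \<partial>lborel \<partial>lborel)"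
proof -
  define Cp where "Cp p = Complex (fst p) (snd p)" for p :: "real \<times> real"
  define \<Phi> where "\<Phi> = (\<integral>\<^sup>+ p. W (Cp p) \<partial>lborel)"
  have rotated_measurable: "(\<lambda>p. W (cis t * Cp p)) \<in> borel_measurable borel" for t
    unfolding Cp_def by (intro measurable_compose[OF borel_measurable_continuous_onI W] continuous_intros)
  have "(\<integral>\<^sup>+ t. ennreal (indicator {0..2*pi} t / (2*pi)) \<partial>lborel)
      = (\<integral>\<^sup>+ t. ennreal (1/(2*pi)) * indicator {0..2*pi} t \<partial>lborel)"
    by (intro nn_integral_cong) (simp split: split_indicator)
  also have "\<dots> = 1"
    by (simp add: nn_integral_cmult_indicator flip: ennreal_mult)
  finally have "(\<integral>\<^sup>+ t. ennreal (indicator {0..2*pi} t / (2*pi)) \<partial>lborel) = 1" .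
  then have "\<Phi> = (\<integral>\<^sup>+ t. ennreal (indicator {0..2*pi} t / (2*pi)) * \<Phi> \<partial>lborel)"
    by (simp add: nn_integral_multc)
  also have "\<dots> = (\<integral>\<^sup>+ t. \<integral>\<^sup>+ p. ennreal (indicator {0..2*pi} t / (2*pi)) * W (cis t * Cp p) \<partial>lborel \<partial>lborel)"
    unfolding \<Phi>_def Cp_def
    by (intro nn_integral_cong) (simp add: nn_integral_cmult rotated_measurable[unfolded Cp_def] nn_integral_lborel_rotate W)
  also have "\<dots> = (\<integral>\<^sup>+ p. \<integral>\<^sup>+ t. ennreal (indicator {0..2*pi} t / (2*pi)) * W (cis t * Cp p) \<partial>lborel \<partial>lborel)"
  proof (rule lborel_pair.Fubini')
    have "(\<lambda>x::(real \<times> real) \<times> real. W (cis (snd x) * Cp (fst x))) \<in> borel_measurable borel"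
      unfolding Cp_def by (intro measurable_compose[OF borel_measurable_continuous_onI W] continuous_intros)
    then have [measurable]: "(\<lambda>x. W (cis (snd x) * Cp (fst x))) \<in> borel_measurable (lborel \<Otimes>\<^sub>M lborel)"
      unfolding lborel_prod by simp
    show "(\<lambda>(p, t). ennreal (indicator {0..2*pi} t / (2*pi)) * W (cis t * Cp p)) \<in> borel_measurable (lborel \<Otimes>\<^sub>M lborel)"
      unfolding case_prod_beta' by measurable
  qed
  finally show ?thesis
    unfolding \<Phi>_def Cp_def .
qed

lemma parseval_powser_circle:
  fixes c :: "nat \<Rightarrow> complex"
  assumes c: "\<And>z. summable (\<lambda>m. c m * z ^ m)"
  shows "summable (\<lambda>m. (cmod (c m))\<^sup>2 * ((cmod z)\<^sup>2) ^ m)"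
    and "(\<integral>\<^sup>+ t. ennreal (indicator {0..2*pi} t * (cmod (\<Sum>m. c m * (cis t * z) ^ m))\<^sup>2) \<partial>lborel)
       = ennreal (2 * pi * (\<Sum>m. (cmod (c m))\<^sup>2 * ((cmod z)\<^sup>2) ^ m))"
proof -
  define d where "d m = c m * z ^ m" for m
  have "norm z < norm (of_real (norm z + 1) :: complex)"
    by simp
  then have d: "summable (\<lambda>m. norm (d m))"
    unfolding d_def by (rule powser_insidea[OF c])
  have coefficients: "(cmod (d m))\<^sup>2 = (cmod (c m))\<^sup>2 * ((cmod z)\<^sup>2) ^ m" for m
    unfolding d_def by (simp add: norm_mult norm_power power_mult_distrib flip: power_mult) (simp add: mult.commute)
  have "c m * (cis t * z) ^ m = d m * cis (real m * t)" for m t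
    unfolding d_def power_mult_distrib Complex.DeMoivre by (simp add: ac_simps)
  then show "summable (\<lambda>m. (cmod (c m))\<^sup>2 * ((cmod z)\<^sup>2) ^ m)"
    and "(\<integral>\<^sup>+ t. ennreal (indicator {0..2*pi} t * (cmod (\<Sum>m. c m * (cis t * z) ^ m))\<^sup>2) \<partial>lborel)
       = ennreal (2 * pi * (\<Sum>m. (cmod (c m))\<^sup>2 * ((cmod z)\<^sup>2) ^ m))"
    using parseval_trig_series[OF d] by (simp_all add: coefficients)
qed

lemma circle_average_gaussian_powser:
  fixes c :: "nat \<Rightarrow> complex"
  assumes c: "\<And>z. summable (\<lambda>m. c m * z ^ m)"
  shows "(\<integral>\<^sup>+ t. ennreal (indicator {0..2*pi} t / (2*pi))
            * ennreal (exp (- (cmod (cis t * z))\<^sup>2) * (cmod (\<Sum>m. c m * (cis t * z) ^ m))\<^sup>2 / pi) \<partial>lborel)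
       = (\<Sum>m. ennreal ((cmod (c m))\<^sup>2 * (exp (- (cmod z)\<^sup>2) * ((cmod z)\<^sup>2) ^ m / pi)))"
proof -
  define h where "h z = (\<Sum>m. c m * z ^ m)" for z
  have h_continuous: "continuous_on UNIV h"
    unfolding h_def by (intro continuous_at_imp_continuous_on ballI isCont_powser_converges_everywhere c)
  have t_measurable: "(\<lambda>t. ennreal (indicator {0..2*pi} t * (cmod (h (cis t * z)))\<^sup>2)) \<in> borel_measurable lborel"
    unfolding measurable_lborel2
    by (intro measurable_compose[OF _ measurable_ennreal] borel_measurable_times borel_measurable_indicator
        borel_measurable_continuous_onI continuous_intros continuous_on_compose2[OF h_continuous]) auto
  have summable: "summable (\<lambda>m. (cmod (c m))\<^sup>2 * ((cmod z)\<^sup>2) ^ m)"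
    by (rule parseval_powser_circle(1)[OF c])
  have "(\<integral>\<^sup>+ t. ennreal (indicator {0..2*pi} t / (2*pi))
            * ennreal (exp (- (cmod (cis t * z))\<^sup>2) * (cmod (h (cis t * z)))\<^sup>2 / pi) \<partial>lborel)
      = (\<integral>\<^sup>+ t. ennreal (exp (- (cmod z)\<^sup>2) / pi / (2*pi)) * ennreal (indicator {0..2*pi} t * (cmod (h (cis t * z)))\<^sup>2) \<partial>lborel)"
    by (intro nn_integral_cong) (simp add: norm_mult ennreal_mult'[symmetric] split: split_indicator)
  also have "\<dots> = ennreal (exp (- (cmod z)\<^sup>2) / pi / (2*pi)) * ennreal (2 * pi * (\<Sum>m. (cmod (c m))\<^sup>2 * ((cmod z)\<^sup>2) ^ m))"
    by (subst nn_integral_cmult[OF t_measurable]) (simp only: h_def parseval_powser_circle(2)[OF c])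
  also have "\<dots> = ennreal (exp (- (cmod z)\<^sup>2) / pi * (\<Sum>m. (cmod (c m))\<^sup>2 * ((cmod z)\<^sup>2) ^ m))"
    by (simp add: ennreal_mult[symmetric] suminf_nonneg[OF summable])
  also have "\<dots> = ennreal (\<Sum>m. (cmod (c m))\<^sup>2 * (exp (- (cmod z)\<^sup>2) * ((cmod z)\<^sup>2) ^ m / pi))"
    using suminf_mult[OF summable, of "exp (- (cmod z)\<^sup>2) / pi"] by (simp add: ac_simps)
  also have "\<dots> = (\<Sum>m. ennreal ((cmod (c m))\<^sup>2 * (exp (- (cmod z)\<^sup>2) * ((cmod z)\<^sup>2) ^ m / pi)))"
    using summable_mult[OF summable, of "exp (- (cmod z)\<^sup>2) / pi"]
    by (intro suminf_ennreal_eq[symmetric] summable_sums) (simp_all add: ac_simps)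
  finally show ?thesis
    unfolding h_def .
qed

lemma nn_integral_fock_powser:
  fixes c :: "nat \<Rightarrow> complex"
  assumes c: "\<And>z. summable (\<lambda>m. c m * z ^ m)"
  shows "(\<integral>\<^sup>+ p. ennreal (exp (- (fst p ^ 2 + snd p ^ 2)) * (cmod (\<Sum>m. c m * Complex (fst p) (snd p) ^ m))\<^sup>2 / pi) \<partial>lborel)
     = (\<Sum>m. ennreal ((cmod (c m))\<^sup>2 * fact m))"
proof -
  define W where "W z = ennreal (exp (- (cmod z)\<^sup>2) * (cmod (\<Sum>m. c m * z ^ m))\<^sup>2 / pi)" for z
  define \<rho> where "\<rho> m p = exp (- (fst p ^ 2 + snd p ^ 2)) * (fst p ^ 2 + snd p ^ 2) ^ m / pi" for m and p :: "real \<times> real"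
  have h_continuous: "continuous_on UNIV (\<lambda>z. \<Sum>m. c m * z ^ m)"
    by (intro continuous_at_imp_continuous_on ballI isCont_powser_converges_everywhere c)
  have W_measurable: "W \<in> borel_measurable borel"
    unfolding W_def
    by (intro measurable_compose[OF borel_measurable_continuous_onI measurable_ennreal]
        continuous_intros continuous_on_compose2[OF h_continuous]) auto
  have \<rho>_measurable: "(\<lambda>p. ennreal (\<rho> m p)) \<in> borel_measurable borel" for m
    unfolding \<rho>_def
    by (intro measurable_compose[OF borel_measurable_continuous_onI measurable_ennreal] continuous_intros) auto
  have cmod_Complex: "(cmod (Complex (fst p) (snd p)))\<^sup>2 = fst p ^ 2 + snd p ^ 2" for p :: "real \<times> real"
    by (simp add: cmod_def)
  have "(\<integral>\<^sup>+ p. W (Complex (fst p) (snd p)) \<partial>lborel) = (\<integral>\<^sup>+ p. (\<Sum>m. ennreal ((cmod (c m))\<^sup>2 * \<rho> m p)) \<partial>lborel)"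
    by (subst nn_integral_angular_average[OF W_measurable])
       (simp only: W_def \<rho>_def circle_average_gaussian_powser[OF c] cmod_Complex)
  also have "\<dots> = (\<integral>\<^sup>+ p. (\<Sum>m. ennreal ((cmod (c m))\<^sup>2) * ennreal (\<rho> m p)) \<partial>lborel)"
    by (simp add: ennreal_mult')
  also have "\<dots> = (\<Sum>m. ennreal ((cmod (c m))\<^sup>2) * (\<integral>\<^sup>+ p. ennreal (\<rho> m p) \<partial>lborel))"
    by (subst nn_integral_suminf) (auto intro!: borel_measurable_times_ennreal \<rho>_measurable simp: nn_integral_cmult \<rho>_measurable)
  also have "\<dots> = (\<Sum>m. ennreal ((cmod (c m))\<^sup>2 * fact m))"
    unfolding \<rho>_def nn_integral_radial_moment by (simp add: ennreal_mult)
  finally show ?thesis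
    unfolding W_def by (simp add: cmod_def)
qed

section \<open>Left multiplication by unit vectors\<close>

definition toggle :: "nat set \<Rightarrow> nat \<Rightarrow> nat set" where
  "toggle C j = (if j \<in> C then C - {j} else insert j C)"

text \<open>The sign in e_j e_(toggle C j) = vec_sign j C e_C.\<close>
definition vec_sign :: "nat \<Rightarrow> nat set \<Rightarrow> real" where
  "vec_sign j C = (-1) ^ card {k\<in>C. k < j} * (if j \<in> C then 1 else -1)"

lemma toggle_toggle [simp]: "toggle (toggle C j) j = C"
  unfolding toggle_def by auto

lemma toggle_commute: "toggle (toggle C j) k = toggle (toggle C k) j"
  unfolding toggle_def by auto

lemma toggle_subset: "C \<subseteq> {1..n} \<Longrightarrow> j \<in> {1..n} \<Longrightarrow> toggle C j \<subseteq> {1..n}"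
  unfolding toggle_def by auto

lemma symdiff_singleton_eq_iff: "({j} - B) \<union> (B - {j}) = C \<longleftrightarrow> B = toggle C j"
  unfolding toggle_def by auto

lemma less_toggle_eq: "{k\<in>toggle C j. k < j} = {k\<in>C. k < j}"
  unfolding toggle_def by auto

lemma csign_singleton_toggle: "csign {j} (toggle C j) = vec_sign j C"
proof -
  have "{(i, k). i \<in> {j} \<and> k \<in> toggle C j \<and> k < i} = Pair j ` {k\<in>C. k < j}"
    using less_toggle_eq[of C j] by auto
  then have "card {(i, k). i \<in> {j} \<and> k \<in> toggle C j \<and> k < i} = card {k\<in>C. k < j}"
    by (simp add: card_image inj_on_def)
  then show ?thesis
    unfolding csign_def vec_sign_def by (auto simp: toggle_def power_add)
qed

lemma vec_sign_toggle: "vec_sign j (toggle C j) = - vec_sign j C"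
  unfolding vec_sign_def less_toggle_eq by (auto simp: toggle_def)

lemma vec_sign_square: "vec_sign j C * vec_sign j C = 1"
  unfolding vec_sign_def by (auto simp: power_mult_distrib[symmetric])

lemma sign_count_toggle:
  assumes "finite C" "j \<noteq> k"
  shows "(-1::real) ^ card {i\<in>toggle C j. i < k} = (-1) ^ card {i\<in>C. i < k} * (if j < k then -1 else 1)"
proof (cases "j < k")
  case False
  then have "{i\<in>toggle C j. i < k} = {i\<in>C. i < k}"
    using assms unfolding toggle_def by auto
  with False show ?thesis
    by simp
next
  case True
  have fin: "finite {i\<in>C. i < k}"
    using assms by auto
  show ?thesis
  proof (cases "j \<in> C")
    case True': True
    then have "{i\<in>toggle C j. i < k} = {i\<in>C. i < k} - {j}"
      unfolding toggle_def by auto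
    moreover have "card {i\<in>C. i < k} = Suc (card ({i\<in>C. i < k} - {j}))"
      using True True' fin by (intro card.remove) auto
    ultimately show ?thesis
      using True by simp
  next
    case False
    then have "{i\<in>toggle C j. i < k} = insert j {i\<in>C. i < k}"
      using True unfolding toggle_def by auto
    then show ?thesis
      using True False fin by simp
  qed
qed

text \<open>Distinct basis vectors anticommute: e_k e_j = - e_j e_k.\<close>
lemma vec_sign_anticommute:
  assumes "finite C" "j \<noteq> k"
  shows "vec_sign j C * vec_sign k (toggle C j) = - (vec_sign k C * vec_sign j (toggle C k))"
proof -
  have "k \<in> toggle C j \<longleftrightarrow> k \<in> C" "j \<in> toggle C k \<longleftrightarrow> j \<in> C"
    using assms unfolding toggle_def by auto
  then show ?thesis
    unfolding vec_sign_def sign_count_toggle[OF assms] sign_count_toggle[OF assms(1) assms(2)[symmetric]]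
    using assms(2) by (cases "j < k") (auto simp: algebra_simps)
qed

lemma para_pure: "x 0 = 0 \<Longrightarrow> para n x A = (\<Sum>j=1..n. x j * (if A = {j} then 1 else 0))"
  unfolding para_def by simp

lemma cmult_pure_para:
  assumes C: "C \<subseteq> {1..n}" and x0: "x 0 = 0"
  shows "cmult n (para n x) b C = (\<Sum>j=1..n. x j * vec_sign j C * b (toggle C j))"
proof -
  define g where "g A = (\<Sum>B\<in>Pow {1..n}. if (A - B) \<union> (B - A) = C then csign A B * b B else 0)" for A
  have g_singleton: "g {j} = vec_sign j C * b (toggle C j)" if "j \<in> {1..n}" for j
    unfolding g_def symdiff_singleton_eq_iff using toggle_subset[OF C that]
    by (simp add: sum.delta csign_singleton_toggle)
  have "cmult n (para n x) b C = (\<Sum>A\<in>Pow {1..n}. para n x A * g A)"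
    unfolding cmult_def g_def sum_distrib_left by (intro sum.cong refl) auto
  also have "\<dots> = (\<Sum>j=1..n. x j * (\<Sum>A\<in>Pow {1..n}. if A = {j} then g A else 0))"
    unfolding para_pure[of x, OF x0] sum_distrib_right sum_distrib_left
    by (subst sum.swap) (auto intro!: sum.cong)
  also have "\<dots> = (\<Sum>j=1..n. x j * vec_sign j C * b (toggle C j))"
    by (intro sum.cong refl) (simp add: sum.delta g_singleton)
  finally show ?thesis .
qed

lemma sum_Pow_toggle:
  assumes "j \<in> {1..n}"
  shows "(\<Sum>C\<in>Pow {1..n}. g C) = (\<Sum>C\<in>Pow {1..n}. g (toggle C j))"
  by (rule sum.reindex_bij_witness[where i="\<lambda>C. toggle C j" and j="\<lambda>C. toggle C j"])
     (use assms toggle_subset in auto)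

lemma cmult_pure_para_skew:
  assumes x0: "x 0 = 0"
  shows "(\<Sum>C\<in>Pow {1..n}. cmult n (para n x) a C * b C) = - (\<Sum>C\<in>Pow {1..n}. a C * cmult n (para n x) b C)"
proof -
  have expand: "(\<Sum>C\<in>Pow {1..n}. cmult n (para n x) a C * b C) =
      (\<Sum>j=1..n. x j * (\<Sum>C\<in>Pow {1..n}. vec_sign j C * a (toggle C j) * b C))" for a b
  proof -
    have "(\<Sum>C\<in>Pow {1..n}. cmult n (para n x) a C * b C) =
        (\<Sum>C\<in>Pow {1..n}. \<Sum>j=1..n. x j * (vec_sign j C * a (toggle C j) * b C))"
      by (intro sum.cong refl) (simp add: cmult_pure_para[where x=x, OF _ x0] sum_distrib_left sum_distrib_right ac_simps)
    then show ?thesis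
      by (subst (asm) sum.swap) (simp add: sum_distrib_left)
  qed
  have reflect: "(\<Sum>C\<in>Pow {1..n}. vec_sign j C * a (toggle C j) * b C)
      = - (\<Sum>C\<in>Pow {1..n}. vec_sign j C * b (toggle C j) * a C)" if "j \<in> {1..n}" for j
    by (subst sum_Pow_toggle[OF that]) (simp add: vec_sign_toggle sum_negf ac_simps)
  have "(\<Sum>C\<in>Pow {1..n}. cmult n (para n x) a C * b C)
      = (\<Sum>j=1..n. x j * - (\<Sum>C\<in>Pow {1..n}. vec_sign j C * b (toggle C j) * a C))"
    unfolding expand[of a b] by (intro sum.cong refl, subst reflect) auto
  also have "\<dots> = - (\<Sum>C\<in>Pow {1..n}. cmult n (para n x) b C * a C)"
    unfolding expand[of b a] by (simp add: sum_negf)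
  finally show ?thesis
    by (simp add: mult.commute)
qed

lemma cmult_pure_para_square:
  assumes C: "C \<subseteq> {1..n}" and x0: "x 0 = 0"
  shows "cmult n (para n x) (cmult n (para n x) b) C = - (\<Sum>j=1..n. (x j)\<^sup>2) * b C"
proof -
  define T where "T j k = x j * x k * (vec_sign j C * vec_sign k (toggle C j)) * b (toggle (toggle C j) k)" for j k
  have fin: "finite C"
    using C finite_subset by blast
  have "cmult n (para n x) (cmult n (para n x) b) C = (\<Sum>j=1..n. \<Sum>k=1..n. T j k)"
    unfolding cmult_pure_para[where x=x, OF C x0] T_def
    by (intro sum.cong refl)
       (simp add: cmult_pure_para[where x=x, OF toggle_subset[OF C] x0] sum_distrib_left sum_distrib_right ac_simps)
  also have "\<dots> = (\<Sum>j=1..n. \<Sum>k=1..n. (T j k + T k j) / 2)"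
    using sum.swap[of T "{1..n}" "{1..n}"] by (simp add: sum.distrib sum_divide_distrib[symmetric])
  also have "\<dots> = (\<Sum>j=1..n. \<Sum>k=1..n. if j = k then T j j else 0)"
  proof (intro sum.cong refl)
    fix j k :: nat
    show "(T j k + T k j) / 2 = (if j = k then T j j else 0)"
    proof (cases "j = k")
      case False
      then have "T k j = - T j k"
        unfolding T_def using vec_sign_anticommute[OF fin False] toggle_commute[of C j k]
        by (simp add: algebra_simps)
      with False show ?thesis
        by simp
    qed simp
  qed
  also have "\<dots> = - (\<Sum>j=1..n. (x j)\<^sup>2) * b C"
    unfolding T_def by (simp add: vec_sign_toggle power2_eq_square vec_sign_square sum_negf sum_distrib_right)
  finally show ?thesis .
qed

lemma cnorm2_cmult_pure_para:
  assumes x0: "x 0 = 0"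
  shows "cnorm2 n (cmult n (para n x) a) = (\<Sum>j=1..n. (x j)\<^sup>2) * cnorm2 n a"
proof -
  have "cnorm2 n (cmult n (para n x) a) = (\<Sum>C\<in>Pow {1..n}. cmult n (para n x) a C * cmult n (para n x) a C)"
    unfolding cnorm2_def by (simp add: power2_eq_square)
  also have "\<dots> = - (\<Sum>C\<in>Pow {1..n}. a C * cmult n (para n x) (cmult n (para n x) a) C)"
    by (rule cmult_pure_para_skew[where x=x, OF x0])
  also have "\<dots> = (\<Sum>j=1..n. (x j)\<^sup>2) * cnorm2 n a"
    unfolding cnorm2_def by (simp add: cmult_pure_para_square[where x=x, OF _ x0] sum_distrib_left sum_negf power2_eq_square ac_simps)
  finally show ?thesis .
qed

lemma cmult_outside: "\<not> C \<subseteq> {1..n} \<Longrightarrow> cmult n a b C = 0"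
  unfolding cmult_def by (intro sum.neutral ballI) auto

lemma cmult_linear_left:
  "cmult n (\<lambda>A. s * p A + t * q A) b C = s * cmult n p b C + t * cmult n q b C"
  unfolding cmult_def
  by (simp add: sum_distrib_left sum.distrib[symmetric] if_distrib algebra_simps cong: if_cong)

lemma cmult_linear_right:
  "cmult n a (\<lambda>B. s * p B + t * q B) C = s * cmult n a p C + t * cmult n a q C"
  unfolding cmult_def
  by (simp add: sum_distrib_left sum.distrib[symmetric] if_distrib algebra_simps cong: if_cong)

lemma cmult_scale_right: "cmult n a (\<lambda>B. r * b B) C = r * cmult n a b C"
  unfolding cmult_def by (simp add: sum_distrib_left if_distrib algebra_simps cong: if_cong)

lemma cmult_cong_right: "(\<And>B. B \<subseteq> {1..n} \<Longrightarrow> b B = b' B) \<Longrightarrow> cmult n a b = cmult n a b'"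
  unfolding cmult_def by (intro ext sum.cong refl) auto

lemma cmult_sums_right:
  assumes "\<And>B. B \<subseteq> {1..n} \<Longrightarrow> (\<lambda>m. c m B) sums s B"
  shows "(\<lambda>m. cmult n a (c m) C) sums cmult n a s C"
proof -
  have linear: "cmult n a b C = (\<Sum>A\<in>Pow {1..n}. \<Sum>B\<in>Pow {1..n}.
      (if (A - B) \<union> (B - A) = C then csign A B * a A else 0) * b B)" for b
    unfolding cmult_def by (intro sum.cong refl) auto
  show ?thesis
    unfolding linear using assms by (intro sums_sum sums_mult) auto
qed

lemma cmult_cone_left:
  assumes "C \<subseteq> {1..n}"
  shows "cmult n cone b C = b C"
proof -
  have "cmult n cone b C = (\<Sum>A\<in>Pow {1..n}. if A = {} then (\<Sum>B\<in>Pow {1..n}. if B = C then b B else 0) else 0)"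
    unfolding cmult_def cone_def by (intro sum.cong refl) (simp add: csign_def cong: if_cong)
  with assms show ?thesis
    by (simp add: sum.delta)
qed

lemma cmult_cone_right:
  assumes "C \<subseteq> {1..n}"
  shows "cmult n a cone C = a C"
proof -
  have "cmult n a cone C = (\<Sum>A\<in>Pow {1..n}. \<Sum>B\<in>Pow {1..n}. if B = {} then (if A = C then a A else 0) else 0)"
    unfolding cmult_def cone_def by (intro sum.cong refl) (auto simp: csign_def)
  with assms show ?thesis
    by (simp add: sum.delta)
qed

lemma sphS_pure_para:
  assumes "I \<in> sphS n"
  obtains x where "x 0 = 0" "(\<Sum>j=1..n. (x j)\<^sup>2) = 1" "I = para n x"
  using assms unfolding sphS_def by auto

lemma sphS_cliff_el: "I \<in> sphS n \<Longrightarrow> cliff_el n I"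
  by (elim sphS_pure_para) (auto simp: cliff_el_def para_pure intro!: sum.neutral)

lemma cmult_sphS_square: "I \<in> sphS n \<Longrightarrow> C \<subseteq> {1..n} \<Longrightarrow> cmult n I (cmult n I b) C = - b C"
  by (elim sphS_pure_para) (simp add: cmult_pure_para_square)

lemma cnorm2_cmult_sphS: "I \<in> sphS n \<Longrightarrow> cnorm2 n (cmult n I b) = cnorm2 n b"
  by (elim sphS_pure_para) (simp add: cnorm2_cmult_pure_para)

lemma cmult_sphS_self: "I \<in> sphS n \<Longrightarrow> cmult n I I C = - cone C"
proof (cases "C \<subseteq> {1..n}")
  case True
  assume I: "I \<in> sphS n"
  have "cmult n I I = cmult n I (cmult n I cone)"
    by (rule cmult_cong_right) (simp add: cmult_cone_right)
  with I True show ?thesis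
    by (simp add: cmult_sphS_square)
qed (auto simp: cmult_outside cone_def)

section \<open>Slices\<close>

lemma slicept_para:
  assumes "x 0 = 0"
  shows "slicept (para n x) u v = para n (\<lambda>j. if j = 0 then u else v * x j)"
  using assms unfolding slicept_def para_def cone_def
  by (auto simp: sum_distrib_left ac_simps intro!: sum.cong)

lemma cmult_slicept_left:
  "C \<subseteq> {1..n} \<Longrightarrow> cmult n (slicept I p q) b C = p * b C + q * cmult n I b C"
  unfolding slicept_def cmult_linear_left by (simp add: cmult_cone_left)

lemma cmult_slicept:
  assumes I: "I \<in> sphS n"
  shows "cmult n (slicept I u v) (slicept I p q) = slicept I (u * p - v * q) (u * q + v * p)"
proof
  fix C
  show "cmult n (slicept I u v) (slicept I p q) C = slicept I (u * p - v * q) (u * q + v * p) C"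
  proof (cases "C \<subseteq> {1..n}")
    case True
    have "cmult n (slicept I u v) (slicept I p q) C = u * slicept I p q C + v * cmult n I (slicept I p q) C"
      by (rule cmult_slicept_left[OF True])
    also have "cmult n I (slicept I p q) C = p * cmult n I cone C + q * cmult n I I C"
      unfolding slicept_def by (rule cmult_linear_right)
    also have "cmult n I cone C = I C"
      by (rule cmult_cone_right[OF True])
    finally show ?thesis
      unfolding slicept_def cmult_sphS_self[OF I] by (simp add: algebra_simps)
  next
    case False
    then have "cone C = 0" "I C = 0"
      using sphS_cliff_el[OF I] by (auto simp: cone_def cliff_el_def)
    with False show ?thesis
      by (simp add: cmult_outside slicept_def)
  qed
qed

lemma cpow_slicept:
  assumes "I \<in> sphS n"
  shows "cpow n (slicept I u v) m = slicept I (Re (Complex u v ^ m)) (Im (Complex u v ^ m))"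
proof (induction m)
  case 0
  then show ?case
    by (simp add: cpow_def slicept_def)
next
  case (Suc m)
  then show ?case
    by (simp add: cpow_def cmult_slicept[OF assms])
qed

section \<open>Power series on a slice\<close>

lemma cmult_powser_sums:
  assumes "\<And>B. B \<subseteq> {1..n} \<Longrightarrow> (\<lambda>m. complex_of_real (c m B) * z ^ m) sums w B"
  shows "(\<lambda>m. complex_of_real (cmult n b (c m) C) * z ^ m) sums
           Complex (cmult n b (\<lambda>B. Re (w B)) C) (cmult n b (\<lambda>B. Im (w B)) C)"
proof -
  have "(\<lambda>m. Re (z ^ m) * c m B) sums Re (w B)" "(\<lambda>m. Im (z ^ m) * c m B) sums Im (w B)"
    if "B \<subseteq> {1..n}" for B
    using sums_Re[OF assms[OF that]] sums_Im[OF assms[OF that]] by (simp_all add: mult.commute)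
  then have "(\<lambda>m. cmult n b (\<lambda>B. Re (z ^ m) * c m B) C) sums cmult n b (\<lambda>B. Re (w B)) C"
    and "(\<lambda>m. cmult n b (\<lambda>B. Im (z ^ m) * c m B) C) sums cmult n b (\<lambda>B. Im (w B)) C"
    by (auto intro: cmult_sums_right)
  then show ?thesis
    unfolding sums_complex_iff cmult_scale_right by (simp add: mult.commute)
qed

lemma cmult_cpow_slicept:
  assumes "I \<in> sphS n" and "C \<subseteq> {1..n}"
  shows "cmult n (cpow n (slicept I u v) m) b C
      = Re (Complex u v ^ m) * b C + Im (Complex u v ^ m) * cmult n I b C"
  unfolding cpow_slicept[OF assms(1)] by (rule cmult_slicept_left[OF assms(2)])

lemma slice_coeff_powser_summable:
  assumes I: "I \<in> sphS n" and C: "C \<subseteq> {1..n}"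
    and summable: "\<And>r. summable (\<lambda>m. cmult n (cpow n (slicept I r 0) m) (a m) C)"
  shows "summable (\<lambda>m. complex_of_real (a m C) * z ^ m)"
proof -
  have "Complex r 0 ^ m = complex_of_real (r ^ m)" for r m
    by (simp add: complex_of_real_def[symmetric])
  then have "summable (\<lambda>m. a m C * r ^ m)" for r
    using summable[of r] by (simp add: cmult_cpow_slicept[OF I C] mult.commute)
  then have "summable (\<lambda>m. complex_of_real (a m C * (norm z + 1) ^ m))"
    by (simp only: summable_complex_of_real)
  then have "summable (\<lambda>m. complex_of_real (a m C) * complex_of_real (norm z + 1) ^ m)"
    by simp
  then show ?thesis
    by (rule powser_inside) simp
qed

text \<open>The coefficient of e_C in f(u + I v) is the real part of the entire function
  \<open>\<Sum>m. complexify n I (a m) C * (u + i v) ^ m\<close>.\<close>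
definition complexify :: "nat \<Rightarrow> cliff \<Rightarrow> cliff \<Rightarrow> nat set \<Rightarrow> complex" where
  "complexify n I b C = Complex (b C) (- cmult n I b C)"

lemma complexify_powser_sums:
  assumes G: "\<And>B. B \<subseteq> {1..n} \<Longrightarrow> (\<lambda>m. complex_of_real (a m B) * z ^ m) sums G B"
    and C: "C \<subseteq> {1..n}"
  shows "(\<lambda>m. complexify n I (a m) C * z ^ m) sums
    Complex (Re (G C) + cmult n I (\<lambda>B. Im (G B)) C) (Im (G C) - cmult n I (\<lambda>B. Re (G B)) C)"
proof -
  have "(\<lambda>m. complexify n I (a m) C * z ^ m) =
      (\<lambda>m. complex_of_real (a m C) * z ^ m - \<i> * (complex_of_real (cmult n I (a m) C) * z ^ m))"
    by (simp add: fun_eq_iff complexify_def complex_eq_iff)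
  moreover have "Complex (Re (G C) + cmult n I (\<lambda>B. Im (G B)) C) (Im (G C) - cmult n I (\<lambda>B. Re (G B)) C)
      = G C - \<i> * Complex (cmult n I (\<lambda>B. Re (G B)) C) (cmult n I (\<lambda>B. Im (G B)) C)"
    by (simp add: complex_eq_iff)
  ultimately show ?thesis
    by (simp only:) (intro sums_diff sums_mult G C cmult_powser_sums)
qed

lemma slice_value_eq:
  assumes I: "I \<in> sphS n" and C: "C \<subseteq> {1..n}"
    and f: "(\<lambda>m. cmult n (cpow n (slicept I u v) m) (a m) C) sums F"
    and G: "\<And>B. B \<subseteq> {1..n} \<Longrightarrow> (\<lambda>m. complex_of_real (a m B) * Complex u v ^ m) sums G B"
  shows "F = Re (G C) + cmult n I (\<lambda>B. Im (G B)) C"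
proof -
  have "(\<lambda>m. Re (complex_of_real (a m C) * Complex u v ^ m)
      + Im (complex_of_real (cmult n I (a m) C) * Complex u v ^ m))
      sums (Re (G C) + cmult n I (\<lambda>B. Im (G B)) C)"
    using sums_Im[OF cmult_powser_sums[OF G]] by (intro sums_add sums_Re G C) simp
  then have "(\<lambda>m. cmult n (cpow n (slicept I u v) m) (a m) C) sums (Re (G C) + cmult n I (\<lambda>B. Im (G B)) C)"
    by (simp add: cmult_cpow_slicept[OF I C] mult.commute)
  with f show ?thesis
    by (rule sums_unique2)
qed

lemma sum_cmod_complexify:
  assumes "I \<in> sphS n"
  shows "(\<Sum>C\<in>Pow {1..n}. (cmod (complexify n I b C))\<^sup>2) = 2 * cnorm2 n b"
proof -
  have "(\<Sum>C\<in>Pow {1..n}. (cmod (complexify n I b C))\<^sup>2) = cnorm2 n b + cnorm2 n (cmult n I b)"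
    unfolding cnorm2_def complexify_def by (simp add: cmod_power2 sum.distrib)
  with assms show ?thesis
    by (simp add: cnorm2_cmult_sphS)
qed

text \<open>Multiplying by I, an isometry with square -1, exchanges the two components.\<close>
lemma sum_cmod_Complex_cmult:
  assumes I: "I \<in> sphS n"
  shows "(\<Sum>C\<in>Pow {1..n}. (cmod (Complex (X C + cmult n I Y C) (Y C - cmult n I X C)))\<^sup>2)
       = 2 * cnorm2 n (\<lambda>C. X C + cmult n I Y C)"
proof -
  have "cnorm2 n (\<lambda>C. Y C - cmult n I X C) = cnorm2 n (cmult n I (\<lambda>C. 1 * Y C + (-1) * cmult n I X C))"
    by (simp add: cnorm2_cmult_sphS[OF I])
  also have "\<dots> = cnorm2 n (\<lambda>C. X C + cmult n I Y C)"
    unfolding cnorm2_def cmult_linear_right by (simp add: cmult_sphS_square[OF I] add.commute)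
  finally show ?thesis
    by (simp add: cmod_power2 sum.distrib cnorm2_def)
qed

lemma complexify_powser_summable:
  assumes I: "I \<in> sphS n" and C: "C \<subseteq> {1..n}"
    and expansion: "\<And>u v C. (\<lambda>m. cmult n (cpow n (slicept I u v) m) (a m) C) sums f (slicept I u v) C"
  shows "summable (\<lambda>m. complexify n I (a m) C * w ^ m)"
proof -
  have "(\<lambda>m. complex_of_real (a m B) * w ^ m) sums (\<Sum>m. complex_of_real (a m B) * w ^ m)"
    if "B \<subseteq> {1..n}" for B
    using slice_coeff_powser_summable[OF I that sums_summable[OF expansion]] by (rule summable_sums)
  then show ?thesis
    by (rule sums_summable[OF complexify_powser_sums[OF _ C]])
qed

lemma slice_norm_eq_complexify:
  assumes I: "I \<in> sphS n"
    and expansion: "\<And>u v C. (\<lambda>m. cmult n (cpow n (slicept I u v) m) (a m) C) sums f (slicept I u v) C"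
  shows "2 * cnorm2 n (f (slicept I u v))
      = (\<Sum>C\<in>Pow {1..n}. (cmod (\<Sum>m. complexify n I (a m) C * Complex u v ^ m))\<^sup>2)"
proof -
  define G where "G B = (\<Sum>m. complex_of_real (a m B) * Complex u v ^ m)" for B
  define X where "X B = Re (G B)" for B
  define Y where "Y B = Im (G B)" for B
  have G: "(\<lambda>m. complex_of_real (a m B) * Complex u v ^ m) sums G B" if "B \<subseteq> {1..n}" for B
    unfolding G_def using slice_coeff_powser_summable[OF I that sums_summable[OF expansion]]
    by (rule summable_sums)
  have "(\<Sum>m. complexify n I (a m) C * Complex u v ^ m) = Complex (X C + cmult n I Y C) (Y C - cmult n I X C)"
    if "C \<subseteq> {1..n}" for C
    unfolding X_def Y_def using complexify_powser_sums[OF G that] by (rule sums_unique[symmetric])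
  then have "(\<Sum>C\<in>Pow {1..n}. (cmod (\<Sum>m. complexify n I (a m) C * Complex u v ^ m))\<^sup>2)
      = 2 * cnorm2 n (\<lambda>C. X C + cmult n I Y C)"
    by (simp add: sum_cmod_Complex_cmult[OF I, symmetric])
  also have "cnorm2 n (\<lambda>C. X C + cmult n I Y C) = cnorm2 n (f (slicept I u v))"
  proof (unfold cnorm2_def, intro sum.cong refl)
    fix C
    assume "C \<in> Pow {1..n}"
    then have "f (slicept I u v) C = X C + cmult n I Y C"
      unfolding X_def Y_def by (intro slice_value_eq[OF I _ expansion G]) auto
    then show "(X C + cmult n I Y C)\<^sup>2 = (f (slicept I u v) C)\<^sup>2"
      by simp
  qed
  finally show ?thesis
    by simp
qed

lemma slice_fock_density_eq:
  assumes I: "I \<in> sphS n"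
    and expansion: "\<And>u v C. (\<lambda>m. cmult n (cpow n (slicept I u v) m) (a m) C) sums f (slicept I u v) C"
  shows "ennreal (exp (- r) * cnorm2 n (f (slicept I u v)) / pi) = (\<Sum>C\<in>Pow {1..n}.
      ennreal (1/2) * ennreal (exp (- r) * (cmod (\<Sum>m. complexify n I (a m) C * Complex u v ^ m))\<^sup>2 / pi))"
proof -
  let ?h = "\<lambda>C. (cmod (\<Sum>m. complexify n I (a m) C * Complex u v ^ m))\<^sup>2"
  have "cnorm2 n (f (slicept I u v)) = (\<Sum>C\<in>Pow {1..n}. ?h C) / 2"
    using slice_norm_eq_complexify[OF I expansion, of u v] by simp
  then have "exp (- r) * cnorm2 n (f (slicept I u v)) / pi = (\<Sum>C\<in>Pow {1..n}. 1/2 * (exp (- r) * ?h C / pi))"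
    by (simp add: sum_distrib_left sum_divide_distrib)
  then have "ennreal (exp (- r) * cnorm2 n (f (slicept I u v)) / pi)
      = (\<Sum>C\<in>Pow {1..n}. ennreal (1/2 * (exp (- r) * ?h C / pi)))"
    by (simp only:) (rule sum_ennreal[symmetric], simp)
  also have "\<dots> = (\<Sum>C\<in>Pow {1..n}. ennreal (1/2) * ennreal (exp (- r) * ?h C / pi))"
    by (intro sum.cong refl ennreal_mult') simp
  finally show ?thesis .
qed

lemma nn_integral_slice_fock:
  assumes I: "I \<in> sphS n"
    and expansion: "\<And>u v C. (\<lambda>m. cmult n (cpow n (slicept I u v) m) (a m) C) sums f (slicept I u v) C"
  shows "(\<integral>\<^sup>+ z. ennreal (exp (- (fst z ^ 2 + snd z ^ 2)) * cnorm2 n (f (slicept I (fst z) (snd z))) / pi) \<partial>lborel)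
     = (\<Sum>m. ennreal (cnorm2 n (a m) * fact m))"
proof -
  define H where "H C p = ennreal (exp (- (fst p ^ 2 + snd p ^ 2))
      * (cmod (\<Sum>m. complexify n I (a m) C * Complex (fst p) (snd p) ^ m))\<^sup>2 / pi)" for C and p :: "real \<times> real"
  have H_integral: "(\<integral>\<^sup>+ p. H C p \<partial>lborel) = (\<Sum>m. ennreal ((cmod (complexify n I (a m) C))\<^sup>2 * fact m))"
    if "C \<in> Pow {1..n}" for C
    unfolding H_def using that by (intro nn_integral_fock_powser complexify_powser_summable[OF I _ expansion]) auto
  have H_measurable: "H C \<in> borel_measurable lborel" if "C \<in> Pow {1..n}" for C
  proof -
    have h_continuous: "continuous_on UNIV (\<lambda>w. \<Sum>m. complexify n I (a m) C * w ^ m)"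
      using that by (intro continuous_at_imp_continuous_on ballI isCont_powser_converges_everywhere
          complexify_powser_summable[OF I _ expansion]) auto
    show ?thesis
      unfolding H_def measurable_lborel2
      by (intro measurable_compose[OF borel_measurable_continuous_onI measurable_ennreal]
          continuous_intros continuous_on_compose2[OF h_continuous]) auto
  qed
  have pointwise: "ennreal (exp (- (fst p ^ 2 + snd p ^ 2)) * cnorm2 n (f (slicept I (fst p) (snd p))) / pi)
      = (\<Sum>C\<in>Pow {1..n}. ennreal (1/2) * H C p)" for p
    unfolding H_def by (rule slice_fock_density_eq[OF I expansion])
  have "(\<integral>\<^sup>+ z. ennreal (exp (- (fst z ^ 2 + snd z ^ 2)) * cnorm2 n (f (slicept I (fst z) (snd z))) / pi) \<partial>lborel)
      = (\<integral>\<^sup>+ p. (\<Sum>C\<in>Pow {1..n}. ennreal (1/2) * H C p) \<partial>lborel)"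
    by (intro nn_integral_cong pointwise)
  also have "\<dots> = (\<Sum>C\<in>Pow {1..n}. \<integral>\<^sup>+ p. ennreal (1/2) * H C p \<partial>lborel)"
    by (rule nn_integral_sum, rule borel_measurable_times_ennreal[OF borel_measurable_const H_measurable])
  also have "\<dots> = (\<Sum>C\<in>Pow {1..n}. ennreal (1/2) * (\<Sum>m. ennreal ((cmod (complexify n I (a m) C))\<^sup>2 * fact m)))"
  proof (intro sum.cong refl)
    fix C
    assume C: "C \<in> Pow {1..n}"
    show "(\<integral>\<^sup>+ p. ennreal (1/2) * H C p \<partial>lborel)
        = ennreal (1/2) * (\<Sum>m. ennreal ((cmod (complexify n I (a m) C))\<^sup>2 * fact m))"
      using nn_integral_cmult[OF H_measurable[OF C]] H_integral[OF C] by simp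
  qed
  also have "\<dots> = ennreal (1/2) * (\<Sum>m. \<Sum>C\<in>Pow {1..n}. ennreal ((cmod (complexify n I (a m) C))\<^sup>2 * fact m))"
    by (simp only: sum_distrib_left[symmetric] suminf_sum[OF summableI])
  also have "\<dots> = (\<Sum>m. ennreal (cnorm2 n (a m) * fact m))"
  proof -
    have "(\<Sum>C\<in>Pow {1..n}. ennreal ((cmod (complexify n I (a m) C))\<^sup>2 * fact m))
        = ennreal (\<Sum>C\<in>Pow {1..n}. (cmod (complexify n I (a m) C))\<^sup>2 * fact m)" for m
      by (rule sum_ennreal) simp
    moreover have "(\<Sum>C\<in>Pow {1..n}. (cmod (complexify n I (a m) C))\<^sup>2 * fact m) = 2 * (cnorm2 n (a m) * fact m)" for m
      using sum_cmod_complexify[OF I, of "a m"] by (simp add: sum_distrib_right[symmetric])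
    moreover have "ennreal (1/2) * ennreal (2 * x) = ennreal x" for x :: real
      by (subst ennreal_mult'[symmetric]) simp_all
    ultimately show ?thesis
      by (simp add: ennreal_suminf_cmult[symmetric])
  qed
  finally show ?thesis .
qed

theorem mainTheorem10:
  fixes n :: nat and I :: cliff and f :: "cliff \<Rightarrow> cliff" and a :: "nat \<Rightarrow> cliff"
  assumes "I \<in> sphS n"
    and "\<forall>m. cliff_el n (a m)"
    and "slice_monogenic n f"
    and "\<forall>x A. (\<lambda>m. cmult n (cpow n (para n x) m) (a m) A) sums (f (para n x) A)"
  shows "fock n I f \<longleftrightarrow> summable (\<lambda>m. cnorm2 n (a m) * fact m)"
proof -
  obtain x where "x 0 = 0" and I: "I = para n x"
    using assms(1) by (rule sphS_pure_para)
  then have "(\<lambda>m. cmult n (cpow n (slicept I u v) m) (a m) C) sums f (slicept I u v) C" for u v C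
    using assms(4) by (simp add: slicept_para)
  then have integral: "(\<integral>\<^sup>+ z. ennreal (exp (- (fst z ^ 2 + snd z ^ 2)) * cnorm2 n (f (slicept I (fst z) (snd z))) / pi) \<partial>lborel)
      = (\<Sum>m. ennreal (cnorm2 n (a m) * fact m))"
    by (rule nn_integral_slice_fock[OF assms(1)])
  have nonneg: "0 \<le> cnorm2 n (a m) * fact m" for m
    unfolding cnorm2_def by (intro mult_nonneg_nonneg sum_nonneg) auto
  have "(\<Sum>m. ennreal (cnorm2 n (a m) * fact m)) < \<infinity> \<longleftrightarrow> summable (\<lambda>m. cnorm2 n (a m) * fact m)"
    using summable_suminf_not_top[OF nonneg] ennreal_suminf_neq_top[OF _ nonneg] by (auto simp: less_top)
  with assms(3) show ?thesis
    unfolding fock_def integral by simp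
qed

end
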